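(* Let $\mathcal K$ be an anonymous $s$-consensus and let $d^N$ be a votewise distance whose seminorm family $(N_n)$ is symmetric and homogeneous. If $(\mathcal K,d^N)$ satisfies the votewise minimizer property, then $(\mathcal K,d^N)$ satisfies the compatible minimizer property with respect to the homogeneity relation $\sim_H$: $d^N(E,\mathcal K_r)=d^N(E',\mathcal K_r)$ for all $r$ whenever $E\sim_H E'$.
   Context: Elections: $E=(C,V,\pi)$ with $C$ a finite subset of a countably infinite set $C^*$, $V$ a finite nonempty subset of a countably infinite set $V^*$, $\pi:V\to L(C)$ ($L(C)$ = strict linear orders of $C$, $L_s(C)$ = strict linear orders of $s$ distinct elements of $C$). Anonymity relation $\sim_A$: same candidate set and some bijection $\varphi:V\to V'$ with $\pi'\circ\varphi=\pi$. Homogeneity relation $\sim_H$: same candidate set $C$ and $|\pi^{-1}(\rho)|/|V|=|\pi'^{-1}(\rho)|/|V'|$ for all $\rho\in L(C)$. An $s$-consensus is a map $\mathcal K$ from $D(\mathcal K)\subseteq\mathcal E$ to $L_s(C^* )$, $\mathcal K_r=\mathcal K^{-1}(r)$; it is anonymous if $D(\mathcal K)$ is a union of $\sim_A$-classes and $\mathcal K$ is constant on them. Votewise distance: fix an enumeration of $V^*$, for each finite $C$ a map $d_C:L(C)\times L(C)\to[0,\infty)$ with $d_C(\rho,\rho)=0$ and the triangle inequality, and seminorms $N_n$ on $\mathbb R^n$; for $E=(C,V,\pi),E'=(C,V,\pi')$, $V=\{v_1<\dots<v_n\}$, $d^N(E,E')=N_n(d_C(\pi(v_1),\pi'(v_1)),\dots,d_C(\pi(v_n),\pi'(v_n)))$,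 and $d^N(E,E')=\infty$ if candidate sets or voter sets differ. The family is symmetric if each $N_n$ is invariant under permuting coordinates, and homogeneous if $N_{kn}(x^{(k)})=N_n(x)$ for all $x\in\mathbb R^n$, $k\ge1$, where $x^{(k)}$ is the concatenation of $k$ copies of $x$. $d(E,A)=\inf_{F\in A}d(E,F)$. Votewise minimizer property (VMP): for each finite $C$ there is a function $\delta_C:L(C)\times L_s(C)\to[0,\infty)$ such that for every $E=(C,V,\pi)$ and every $r\in L_s(C)$ there exists $\pi^*:V\to L(C)$ with $(C,V,\pi^* )\in\mathcal K_r$, $d^N(E,(C,V,\pi^* ))=d^N(E,\mathcal K_r)$, and $d_C(\pi(v),\pi^*(v))=\delta_C(\pi(v),r)$ for every $v\in V$. *)

theory Defs
  imports Complex_Main "HOL-Library.Extended_Real" "HOL-Library.Countable" "HOL-Library.Multiset"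
begin

text \<open>Strict linear orders of a finite candidate set, represented as rankings (lists
  without repetitions, best candidate first).\<close>

definition lin_orders :: "'c set \<Rightarrow> 'c list set" where
  "lin_orders C = {xs. distinct xs \<and> set xs = C}"

text \<open>Strict linear orders of s distinct elements of C (L_s(C)); L_s(C*) is lin_orders_s s UNIV.\<close>

definition lin_orders_s :: "nat \<Rightarrow> 'c set \<Rightarrow> 'c list set" where
  "lin_orders_s s C = {xs. distinct xs \<and> length xs = s \<and> set xs \<subseteq> C}"

text \<open>An election (C, V, pi).  The profile is normalised to [] outside V, so that
  elections are determined by pi restricted to V.\<close>

type_synonym ('c, 'v) election = "'c set \<times> 'v set \<times> ('v \<Rightarrow> 'c list)"

definition is_election :: "('c, 'v) election \<Rightarrow> bool" where
  "is_election E = (case E of (C, V, \<pi>) \<Rightarrow>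
     finite C \<and> finite V \<and> V \<noteq> {} \<and> (\<forall>v\<in>V. \<pi> v \<in> lin_orders C) \<and> (\<forall>v. v \<notin> V \<longrightarrow> \<pi> v = []))"

definition elections :: "('c, 'v) election set" where
  "elections = {E. is_election E}"

definition anon_rel :: "('c, 'v) election \<Rightarrow> ('c, 'v) election \<Rightarrow> bool" where
  "anon_rel E E' = (case E of (C, V, \<pi>) \<Rightarrow> case E' of (C', V', \<pi>') \<Rightarrow>
     C = C' \<and> (\<exists>\<phi>. bij_betw \<phi> V V' \<and> (\<forall>v\<in>V. \<pi>' (\<phi> v) = \<pi> v)))"

definition homog_rel :: "('c, 'v) election \<Rightarrow> ('c, 'v) election \<Rightarrow> bool" where
  "homog_rel E E' = (case E of (C, V, \<pi>) \<Rightarrow> case E' of (C', V', \<pi>') \<Rightarrow>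
     C = C' \<and> (\<forall>\<rho>\<in>lin_orders C.
        real (card {v\<in>V. \<pi> v = \<rho>}) / real (card V) = real (card {v\<in>V'. \<pi>' v = \<rho>}) / real (card V')))"

text \<open>An s-consensus: a partial map K from elections to L_s(C*); D(K) = {E. K E \<noteq> None}.\<close>

definition is_consensus :: "nat \<Rightarrow> (('c, 'v) election \<Rightarrow> 'c list option) \<Rightarrow> bool" where
  "is_consensus s K = (\<forall>E r. K E = Some r \<longrightarrow> E \<in> elections \<and> r \<in> lin_orders_s s UNIV)"

definition consensus_class :: "(('c, 'v) election \<Rightarrow> 'c list option) \<Rightarrow> 'c list \<Rightarrow> ('c, 'v) election set" where
  "consensus_class K r = {E. K E = Some r}"

definition anonymous_consensus :: "(('c, 'v) election \<Rightarrow> 'c list option) \<Rightarrow> bool" where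
  "anonymous_consensus K = (\<forall>E\<in>elections. \<forall>E'\<in>elections. anon_rel E E' \<longrightarrow> K E = K E')"

text \<open>Seminorm family: N is applied to a list of length n, playing the role of N_n.\<close>

definition seminorm_family :: "(real list \<Rightarrow> real) \<Rightarrow> bool" where
  "seminorm_family N \<longleftrightarrow> (\<forall>xs ys. length xs = length ys \<longrightarrow> N (map2 (+) xs ys) \<le> N xs + N ys)
     \<and> (\<forall>c xs. N (map (\<lambda>x. c * x) xs) = \<bar>c\<bar> * N xs)"

definition symmetric_family :: "(real list \<Rightarrow> real) \<Rightarrow> bool" where
  "symmetric_family N = (\<forall>xs ys. mset xs = mset ys \<longrightarrow> N xs = N ys)"

definition homogeneous_family :: "(real list \<Rightarrow> real) \<Rightarrow> bool" where
  "homogeneous_family N = (\<forall>xs k. k \<ge> 1 \<longrightarrow> N (concat (replicate k xs)) = N xs)"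

definition ranking_distances :: "('c set \<Rightarrow> 'c list \<Rightarrow> 'c list \<Rightarrow> real) \<Rightarrow> bool" where
  "ranking_distances dC = (\<forall>C. finite C \<longrightarrow>
     (\<forall>\<rho>\<in>lin_orders C. \<forall>\<sigma>\<in>lin_orders C. dC C \<rho> \<sigma> \<ge> 0) \<and>
     (\<forall>\<rho>\<in>lin_orders C. dC C \<rho> \<rho> = 0) \<and>
     (\<forall>\<rho>\<in>lin_orders C. \<forall>\<sigma>\<in>lin_orders C. \<forall>\<tau>\<in>lin_orders C. dC C \<rho> \<tau> \<le> dC C \<rho> \<sigma> + dC C \<sigma> \<tau>))"

definition voter_list :: "(nat \<Rightarrow> 'v) \<Rightarrow> 'v set \<Rightarrow> 'v list" where
  "voter_list enum V = map enum (sorted_list_of_set (inv enum ` V))"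

definition votewise_dist ::
  "(nat \<Rightarrow> 'v) \<Rightarrow> ('c set \<Rightarrow> 'c list \<Rightarrow> 'c list \<Rightarrow> real) \<Rightarrow> (real list \<Rightarrow> real)
     \<Rightarrow> ('c, 'v) election \<Rightarrow> ('c, 'v) election \<Rightarrow> ereal" where
  "votewise_dist enum dC N E E' = (case E of (C, V, \<pi>) \<Rightarrow> case E' of (C', V', \<pi>') \<Rightarrow>
     if C = C' \<and> V = V' then ereal (N (map (\<lambda>v. dC C (\<pi> v) (\<pi>' v)) (voter_list enum V))) else \<infinity>)"

definition set_dist :: "(('c, 'v) election \<Rightarrow> ('c, 'v) election \<Rightarrow> ereal)
     \<Rightarrow> ('c, 'v) election \<Rightarrow> ('c, 'v) election set \<Rightarrow> ereal" where
  "set_dist d E A = (INF F\<in>A. d E F)"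

definition votewise_minimizer_property ::
  "nat \<Rightarrow> (('c, 'v) election \<Rightarrow> 'c list option) \<Rightarrow> (nat \<Rightarrow> 'v)
     \<Rightarrow> ('c set \<Rightarrow> 'c list \<Rightarrow> 'c list \<Rightarrow> real) \<Rightarrow> (real list \<Rightarrow> real) \<Rightarrow> bool" where
  "votewise_minimizer_property s K enum dC N = (\<forall>C. finite C \<longrightarrow>
     (\<exists>\<delta> :: 'c list \<Rightarrow> 'c list \<Rightarrow> real.
        (\<forall>\<rho>\<in>lin_orders C. \<forall>r\<in>lin_orders_s s C. \<delta> \<rho> r \<ge> 0) \<and>
        (\<forall>V \<pi>. is_election (C, V, \<pi>) \<longrightarrow> (\<forall>r\<in>lin_orders_s s C.
           (\<exists>\<pi>s. (C, V, \<pi>s) \<in> consensus_class K r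
              \<and> votewise_dist enum dC N (C, V, \<pi>) (C, V, \<pi>s)
                  = set_dist (votewise_dist enum dC N) (C, V, \<pi>) (consensus_class K r)
              \<and> (\<forall>v\<in>V. dC C (\<pi> v) (\<pi>s v) = \<delta> (\<pi> v) r))))))"

end

theory Submission
  imports Defs
begin

text \<open>Under the votewise minimizer property the distance of an election to \<open>\<K>\<^sub>r\<close> is
  \<open>N\<close> applied to the per-voter values \<open>\<delta>\<^sub>C(\<pi> v, r)\<close>, which depend on a voter only through
  its vote.  By symmetry of \<open>N\<close> this distance is a function of the multiset of votes, and
  by homogeneity it is unchanged when every vote is replicated equally often.  Two
  elections related by \<open>\<sim>\<^sub>H\<close> with \<open>n\<close> and \<open>n'\<close> voters become equal as multisets after
  replicating the first \<open>n'\<close> times and the second \<open>n\<close> times.\<close>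

lemma count_image_mset_mset_set:
  "finite V \<Longrightarrow> count (image_mset \<pi> (mset_set V)) \<rho> = card {v\<in>V. \<pi> v = \<rho>}"
proof (induction V rule: finite_induct)
  case (insert x F)
  have "{v \<in> insert x F. \<pi> v = \<rho>}
      = (if \<pi> x = \<rho> then insert x {v \<in> F. \<pi> v = \<rho>} else {v \<in> F. \<pi> v = \<rho>})"
    by auto
  with insert show ?case by auto
qed simp

lemma image_mset_repeat_mset: "image_mset f (repeat_mset k M) = repeat_mset k (image_mset f M)"
  by (induction k) auto

lemma mset_concat_replicate: "mset (concat (replicate k xs)) = repeat_mset k (mset xs)"
  by (induction k) auto

lemma symmetric_homogeneous_family_eq:
  assumes "symmetric_family N" and "homogeneous_family N"
    and "k \<ge> 1" and "m \<ge> 1"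
    and "repeat_mset k (mset xs) = repeat_mset m (mset ys)"
  shows "N xs = N ys"
proof -
  have "N xs = N (concat (replicate k xs))"
    using assms(2,3) unfolding homogeneous_family_def by simp
  also have "\<dots> = N (concat (replicate m ys))"
    using assms(1,5) unfolding symmetric_family_def by (simp add: mset_concat_replicate)
  also have "\<dots> = N ys"
    using assms(2,4) unfolding homogeneous_family_def by simp
  finally show ?thesis .
qed

lemma set_voter_list:
  assumes "bij enum" and "finite V"
  shows "set (voter_list enum V) = V"
  using assms unfolding voter_list_def by (simp add: image_image bij_is_surj surj_f_inv_f)

lemma mset_voter_list:
  assumes "bij enum" and "finite V"
  shows "mset (voter_list enum V) = mset_set V"
proof -
  have "distinct (voter_list enum V)"
    using assms unfolding voter_list_def
    by (simp add: distinct_map bij_is_inj inj_on_subset[of enum UNIV])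
  then show ?thesis
    using set_voter_list[OF assms] by (metis mset_set_set)
qed

lemma homog_rel_repeat_mset_votes:
  assumes "homog_rel (C, V, \<pi>) (C', V', \<pi>')"
    and "is_election (C, V, \<pi>)" and "is_election (C', V', \<pi>')"
  shows "repeat_mset (card V') (image_mset \<pi> (mset_set V))
       = repeat_mset (card V) (image_mset \<pi>' (mset_set V'))"
proof (rule multiset_eqI)
  fix \<rho>
  have V: "finite V" "V \<noteq> {}" "\<forall>v\<in>V. \<pi> v \<in> lin_orders C"
    and V': "finite V'" "V' \<noteq> {}" "\<forall>v\<in>V'. \<pi>' v \<in> lin_orders C'"
    using assms(2,3) unfolding is_election_def by auto
  have "card V' * card {v\<in>V. \<pi> v = \<rho>} = card V * card {v\<in>V'. \<pi>' v = \<rho>}"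
  proof (cases "\<rho> \<in> lin_orders C")
    case True
    with assms(1) have "real (card {v\<in>V. \<pi> v = \<rho>}) / real (card V)
        = real (card {v\<in>V'. \<pi>' v = \<rho>}) / real (card V')"
      unfolding homog_rel_def by auto
    with V V' have "real (card V' * card {v\<in>V. \<pi> v = \<rho>})
        = real (card V * card {v\<in>V'. \<pi>' v = \<rho>})"
      by (simp add: field_simps)
    then show ?thesis
      by (simp only: of_nat_eq_iff)
  next
    case False
    moreover have "C' = C"
      using assms(1) unfolding homog_rel_def by simp
    ultimately have "{v\<in>V. \<pi> v = \<rho>} = {}" "{v\<in>V'. \<pi>' v = \<rho>} = {}"
      using V(3) V'(3) by auto
    then show ?thesis by (simp only: card.empty mult_0_right)
  qed
  with V(1) V'(1) show "count (repeat_mset (card V') (image_mset \<pi> (mset_set V))) \<rho>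
      = count (repeat_mset (card V) (image_mset \<pi>' (mset_set V'))) \<rho>"
    by (simp add: count_image_mset_mset_set)
qed

lemma votewise_minimizer_set_dist:
  assumes "votewise_minimizer_property s K enum dC N" and "bij enum" and "finite C"
  obtains \<delta> :: "'c list \<Rightarrow> 'c list \<Rightarrow> real" where
    "\<And>(V :: 'v set) \<pi> r. is_election (C, V, \<pi>) \<Longrightarrow> r \<in> lin_orders_s s C \<Longrightarrow>
       set_dist (votewise_dist enum dC N) (C, V, \<pi>) (consensus_class K r)
         = ereal (N (map (\<lambda>v. \<delta> (\<pi> v) r) (voter_list enum V)))"
proof -
  from assms(1)[unfolded votewise_minimizer_property_def, rule_format, OF assms(3)]
  obtain \<delta> :: "'c list \<Rightarrow> 'c list \<Rightarrow> real" where \<delta>: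
    "\<forall>V \<pi>. is_election (C, V, \<pi>) \<longrightarrow> (\<forall>r\<in>lin_orders_s s C.
       \<exists>\<pi>s. (C, V, \<pi>s) \<in> consensus_class K r
         \<and> votewise_dist enum dC N (C, V, \<pi>) (C, V, \<pi>s)
             = set_dist (votewise_dist enum dC N) (C, V, \<pi>) (consensus_class K r)
         \<and> (\<forall>v\<in>V. dC C (\<pi> v) (\<pi>s v) = \<delta> (\<pi> v) r))"
    by (elim exE conjE) (rule that)
  show thesis
  proof (rule that)
    fix V :: "'v set" and \<pi> r
    assume el: "is_election (C, V, \<pi>)" and r: "r \<in> lin_orders_s s C"
    obtain \<pi>s where
      min: "votewise_dist enum dC N (C, V, \<pi>) (C, V, \<pi>s)
             = set_dist (votewise_dist enum dC N) (C, V, \<pi>) (consensus_class K r)"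
      and vote: "\<forall>v\<in>V. dC C (\<pi> v) (\<pi>s v) = \<delta> (\<pi> v) r"
      using \<delta>[rule_format, OF el r] by blast
    have "set (voter_list enum V) = V"
      using el assms(2) by (simp add: set_voter_list is_election_def)
    with vote have "map (\<lambda>v. dC C (\<pi> v) (\<pi>s v)) (voter_list enum V)
        = map (\<lambda>v. \<delta> (\<pi> v) r) (voter_list enum V)"
      by simp
    with min show "set_dist (votewise_dist enum dC N) (C, V, \<pi>) (consensus_class K r)
         = ereal (N (map (\<lambda>v. \<delta> (\<pi> v) r) (voter_list enum V)))"
      unfolding votewise_dist_def by simp
  qed
qed

theorem proposition6p7:
  fixes s :: nat
    and K :: "('c::countable, 'v) election \<Rightarrow> 'c list option"
    and enum :: "nat \<Rightarrow> 'v"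
    and dC :: "'c set \<Rightarrow> 'c list \<Rightarrow> 'c list \<Rightarrow> real"
    and N :: "real list \<Rightarrow> real"
  assumes "infinite (UNIV :: 'c set)"
    and "bij enum"
    and "is_consensus s K"
    and "anonymous_consensus K"
    and "ranking_distances dC"
    and "seminorm_family N"
    and "symmetric_family N"
    and "homogeneous_family N"
    and "votewise_minimizer_property s K enum dC N"
  shows "\<forall>E\<in>elections. \<forall>E'\<in>elections. homog_rel E E' \<longrightarrow>
           (\<forall>r\<in>lin_orders_s s (fst E).
              set_dist (votewise_dist enum dC N) E (consensus_class K r)
                = set_dist (votewise_dist enum dC N) E' (consensus_class K r))"
proof (intro ballI impI)
  fix E E' :: "('c, 'v) election" and r :: "'c list"
  assume "E \<in> elections" "E' \<in> elections" and hom: "homog_rel E E'"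
    and r: "r \<in> lin_orders_s s (fst E)"
  obtain C V \<pi> C' V' \<pi>' where E: "E = (C, V, \<pi>)" and E': "E' = (C', V', \<pi>')"
    by (cases E, cases E')
  with hom have "C' = C"
    unfolding homog_rel_def by simp
  with \<open>E \<in> elections\<close> \<open>E' \<in> elections\<close> E E'
  have el: "is_election (C, V, \<pi>)" and el': "is_election (C, V', \<pi>')"
    by (simp_all add: elections_def)
  then have V: "finite C" "finite V" "card V \<ge> 1" and V': "finite V'" "card V' \<ge> 1"
    by (auto simp: is_election_def Suc_le_eq card_gt_0_iff)
  obtain \<delta> where \<delta>: "\<And>V \<pi> r. is_election (C, V, \<pi>) \<Longrightarrow> r \<in> lin_orders_s s C \<Longrightarrow>
       set_dist (votewise_dist enum dC N) (C, V, \<pi>) (consensus_class K r)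
         = ereal (N (map (\<lambda>v. \<delta> (\<pi> v) r) (voter_list enum V)))"
    using votewise_minimizer_set_dist[OF assms(9,2) V(1)] by blast
  have "repeat_mset (card V') (image_mset \<pi> (mset_set V))
      = repeat_mset (card V) (image_mset \<pi>' (mset_set V'))"
    using homog_rel_repeat_mset_votes hom el el' E E' \<open>C' = C\<close> by blast
  then have "image_mset (\<lambda>\<rho>. \<delta> \<rho> r) (repeat_mset (card V') (image_mset \<pi> (mset_set V)))
      = image_mset (\<lambda>\<rho>. \<delta> \<rho> r) (repeat_mset (card V) (image_mset \<pi>' (mset_set V')))"
    by (rule arg_cong)
  then have "repeat_mset (card V') (mset (map (\<lambda>v. \<delta> (\<pi> v) r) (voter_list enum V)))
      = repeat_mset (card V) (mset (map (\<lambda>v. \<delta> (\<pi>' v) r) (voter_list enum V')))"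
    using assms(2) V(2) V'(1)
    by (simp add: mset_voter_list image_mset_repeat_mset image_mset.compositionality comp_def)
  then have "N (map (\<lambda>v. \<delta> (\<pi> v) r) (voter_list enum V))
      = N (map (\<lambda>v. \<delta> (\<pi>' v) r) (voter_list enum V'))"
    by (rule symmetric_homogeneous_family_eq[OF assms(7,8) V'(2) V(3)])
  with r show "set_dist (votewise_dist enum dC N) E (consensus_class K r)
      = set_dist (votewise_dist enum dC N) E' (consensus_class K r)"
    using E E' \<open>C' = C\<close> el el' by (simp add: \<delta>)
qed

end
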